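(* Let $p\in[1,\infty]$ and let the plant, controller operators, concatenated controller and update instants be as described in the context. Let $\bar\gamma>0$ and suppose that all operators $\mathcal{M}^{(i)}$, $i\ge 0$, satisfy $\gamma(\mathcal{M}^{(i)})\le\bar\gamma$. Suppose there exist a non-negative scalar sequence $\mathbf r=\{r^{(i)}\}_{i\ge1}\in\ell_p$ and thresholds $\epsilon^{(i)}>0$, $i\ge1$, such that $$\gamma(\mathcal F)\,\big(\gamma(\mathcal{M}^{(i)})+1\big)\,\epsilon^{(i)}\le r^{(i)}\qquad\forall i\ge1,$$ and suppose that every controller update is performed only when it is admissible, i.e. at every update instant $t_i$, $i\ge1$, $$|x_{t_i}|\le\epsilon^{(i)}.$$ Then for every disturbance sequence $\mathbf w\in\ell_p^n$, the closed-loop trajectories of the plant under the concatenated controller $\tilde{\mathcal M}$ satisfy $\mathbf x\in\ell_p^n$ and $\mathbf u\in\ell_p^m$; i.e. the resulting time-varying closed loop is $\ell_p$-stable.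
   Context: Notation: $\ell^n$ is the set of sequences $\mathbf v=(v_0,v_1,\dots)$ with $v_t\in\mathbb R^n$; $|\cdot|$ is a fixed vector norm; $\|\mathbf v\|_p=(\sum_t|v_t|^p)^{1/p}$ for $p<\infty$ and $\|\mathbf v\|_\infty=\sup_t|v_t|$; $\ell_p^n=\{\mathbf v\in\ell^n:\|\mathbf v\|_p<\infty\}$; $v_{a:b}=(v_a,\dots,v_b)$, and norms of finite segments are defined in the same way. An operator $\mathbf A:\ell^n\to\ell^m$ is causal if $(\mathbf A(\mathbf x))_t$ depends only on $x_{0:t}$. Plant: $x_t=f_{t-1}(x_{t-1},u_{t-1})+w_t$ for $t\ge1$, with $x_t\in\mathbb R^n$, $u_t\in\mathbb R^m$, and the convention $w_0=x_0$. Standing assumption on the plant (input-to-state operator $\mathcal F:(\mathbf u,\mathbf w)\mapsto\mathbf x$ with finite $\ell_p$-gain $\gamma(\mathcal F)$, where an initial state is treated as a disturbance impulse): for every starting time $s\ge0$, every state $x_s$, every $N\ge s$ and all input and disturbance sequences, the trajectory started from $x_s$ at time $s$ satisfies $\|x_{s:N}\|_p\le\gamma(\mathcal F)\,|x_s|+\gamma(\mathcal F)\big(\|u_{s:N}\|_p+\|w_{s:N}\|_p\big)$; in particular (for $s=0$, $x_0=w_0$) $\|x_{0:N}\|_p\le\gamma(\mathcal F)(\|u_{0:N}\|_p+\|w_{0:N}\|_p)$. Controller operators: each $\mathcal M^{(i)}:\ell^n\to\ell^m$, $i\ge0$, is a causal operator (e.g. a time-invariant dynamical system started at zero internal state) with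 finite $\ell_p$-gain $\gamma(\mathcal M^{(i)})>0$, in the sense that for every input sequence $\mathbf z$ and every $N\ge0$, $\|(\mathcal M^{(i)}(\mathbf z))_{0:N}\|_p\le\gamma(\mathcal M^{(i)})\|z_{0:N}\|_p$. Update instants: $t_0=0$, $t_{i+1}=t_i+\mu(x_{t_i})$ for $i\ge0$, where $\mu:\mathbb R^n\to\mathbb N_{\ge1}$ (finitely or infinitely many updates; if finitely many, the last window is infinite). Concatenated controller $\tilde{\mathcal M}$: for $t\in[t_i,t_{i+1})$, $u_t=(\mathcal M^{(i)}(\mathbf z^{(i)}))_{t-t_i}$, where $\mathbf z^{(i)}=(x_{t_i},w_{t_i+1},w_{t_i+2},\dots)$ and $\mathcal M^{(i)}$ is (re)initialized with zero internal state at time $t_i$. (For $i=0$, $\mathbf z^{(0)}=\mathbf w$ since $w_0=x_0$.) *)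

theory Defs
  imports "HOL-Analysis.Analysis" "HOL-Library.Extended_Nat"
begin

definition is_vnorm :: "('a::real_vector \<Rightarrow> real) \<Rightarrow> bool" where
  "is_vnorm N \<longleftrightarrow> (\<forall>x. N x = 0 \<longleftrightarrow> x = 0) \<and> (\<forall>x y. N (x + y) \<le> N x + N y)
      \<and> (\<forall>c x. N (c *\<^sub>R x) = \<bar>c\<bar> * N x)"

definition seg_norm :: "ereal \<Rightarrow> ('a \<Rightarrow> real) \<Rightarrow> (nat \<Rightarrow> 'a) \<Rightarrow> nat \<Rightarrow> nat \<Rightarrow> real" where
  "seg_norm p N v a b =
     (if p = \<infinity> then Max ((\<lambda>t. N (v t)) ` {a..b})
      else (\<Sum>t=a..b. N (v t) powr real_of_ereal p) powr (1 / real_of_ereal p))"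

definition in_lp :: "ereal \<Rightarrow> ('a \<Rightarrow> real) \<Rightarrow> (nat \<Rightarrow> 'a) \<Rightarrow> bool" where
  "in_lp p N v =
     (if p = \<infinity> then (\<exists>B. \<forall>t. N (v t) \<le> B)
      else summable (\<lambda>t. N (v t) powr real_of_ereal p))"

text \<open>Plant trajectory started at time s from state xs: value at time s + k.\<close>
primrec plant_traj :: "(nat \<Rightarrow> 'x \<Rightarrow> 'u \<Rightarrow> 'x::plus) \<Rightarrow> nat \<Rightarrow> 'x \<Rightarrow> (nat \<Rightarrow> 'u) \<Rightarrow> (nat \<Rightarrow> 'x) \<Rightarrow> nat \<Rightarrow> 'x" where
  "plant_traj f s xs u w 0 = xs"
| "plant_traj f s xs u w (Suc k) = f (s + k) (plant_traj f s xs u w k) (u (s + k)) + w (s + k + 1)"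

definition causal :: "((nat \<Rightarrow> 'a) \<Rightarrow> (nat \<Rightarrow> 'b)) \<Rightarrow> bool" where
  "causal A \<longleftrightarrow> (\<forall>z z' t. (\<forall>k\<le>t. z k = z' k) \<longrightarrow> A z t = A z' t)"

end

theory Submission
  imports Defs
begin

text \<open>
  Between two consecutive update instants t_i <= t < t_(i+1) the loop is the plant driven by a
  freshly started controller whose input is x(t_i) followed by the disturbance. Composing the
  two gains bounds the l_p norm of the state on every truncation of the window by
  gamma(F) (gamma(M_i) + 1) |x(t_i)| plus a fixed multiple of the norm of w there, and
  admissibility bounds the first term by r_i (the first window starts at x(0) = w(0) instead).
  Adding up p-th powers over the windows, or taking the supremum if p = infinity, gives x in l_p
  because r and w are; the controller gains then bound u window by window in the same way.
\<close>

lemma ge_one_ereal_cases: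
  fixes p :: ereal
  assumes "1 \<le> p"
  obtains "p = \<infinity>" | q where "p = ereal q" "1 \<le> q"
  using assms by (cases p) auto

lemma vnorm_nonneg:
  assumes "is_vnorm N"
  shows "0 \<le> N x"
proof -
  have "0 = N (x + (-1) *\<^sub>R x)" using assms unfolding is_vnorm_def by simp
  also have "\<dots> \<le> N x + N ((-1) *\<^sub>R x)" using assms unfolding is_vnorm_def by blast
  also have "N ((-1) *\<^sub>R x) = N x" using assms unfolding is_vnorm_def by (metis abs_neg_one mult_1)
  finally show ?thesis by linarith
qed

lemma powr_add_le_add_powr:
  fixes a b q :: real
  assumes "0 \<le> a" "0 \<le> b" "1 \<le> q"
  shows "a powr q + b powr q \<le> (a + b) powr q"
proof (cases "a + b = 0")
  case True
  then have "a = 0" "b = 0" using assms by auto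
  then show ?thesis by simp
next
  case False
  then have pos: "0 < a + b" using assms by simp
  have part: "c powr q \<le> c / (a + b) * (a + b) powr q" if "0 \<le> c" "c \<le> a + b" for c
  proof -
    have "c powr q = (c / (a + b)) powr q * (a + b) powr q"
      using pos that by (simp add: powr_mult[symmetric])
    also have "\<dots> \<le> c / (a + b) * (a + b) powr q"
      using powr_mono'[of 1 q "c / (a + b)"] pos that assms by (intro mult_right_mono) auto
    finally show ?thesis .
  qed
  have "a powr q + b powr q \<le> a / (a + b) * (a + b) powr q + b / (a + b) * (a + b) powr q"
    using part[of a] part[of b] assms by (intro add_mono) auto
  also have "\<dots> = (a + b) powr q"
    using pos by (simp add: add_divide_distrib[symmetric] distrib_right[symmetric])
  finally show ?thesis .
qed

lemma root_powr_add_le: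
  fixes a b q :: real
  assumes "0 \<le> a" "0 \<le> b" "1 \<le> q"
  shows "(a powr q + b powr q) powr (1 / q) \<le> a + b"
proof -
  have "(a powr q + b powr q) powr (1 / q) \<le> ((a + b) powr q) powr (1 / q)"
    using powr_add_le_add_powr[OF assms] assms by (intro powr_mono2) auto
  also have "\<dots> = a + b" using assms by (simp add: powr_powr)
  finally show ?thesis .
qed

lemma add_powr_le_two_powr:
  fixes a b q :: real
  assumes "0 \<le> a" "0 \<le> b" "0 < q"
  shows "(a + b) powr q \<le> 2 powr q * (a powr q + b powr q)"
proof -
  have "(a + b) powr q \<le> (2 * max a b) powr q" using assms by (intro powr_mono2) auto
  also have "\<dots> = 2 powr q * max a b powr q" using assms by (simp add: powr_mult)
  also have "max a b powr q \<le> a powr q + b powr q" by (cases "a \<le> b") auto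
  finally show ?thesis by simp
qed

lemma le_powr_if_root_le:
  fixes A b q :: real
  assumes "0 \<le> A" "0 < q" "A powr (1 / q) \<le> b"
  shows "A \<le> b powr q"
proof -
  have "A = (A powr (1 / q)) powr q" using assms by (simp add: powr_powr)
  also have "\<dots> \<le> b powr q" using assms by (intro powr_mono2) auto
  finally show ?thesis .
qed

lemma seg_norm_shift:
  assumes "a \<le> b"
  shows "seg_norm p N v a b = seg_norm p N (\<lambda>j. v (j + a)) 0 (b - a)"
proof -
  have "{a..b} = (\<lambda>j. j + a) ` {0..b - a}"
    using assms by (auto simp: image_iff intro!: bexI[where x = "_ - a"])
  then have "(\<lambda>t. N (v t)) ` {a..b} = (\<lambda>j. N (v (j + a))) ` {0..b - a}"
    by (simp only: image_image)
  moreover have "(\<Sum>t=a..b. g t) = (\<Sum>j=0..b - a. g (j + a))" for g :: "nat \<Rightarrow> real"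
    using sum.shift_bounds_cl_nat_ivl[of g 0 a "b - a"] assms by simp
  ultimately show ?thesis unfolding seg_norm_def by simp
qed

lemma seg_norm_cong:
  assumes "\<And>t. a \<le> t \<Longrightarrow> t \<le> b \<Longrightarrow> N (v t) = N' (v' t)"
  shows "seg_norm p N v a b = seg_norm p N' v' a b"
  unfolding seg_norm_def using assms by (auto intro!: sum.cong image_cong)

lemma seg_norm_ge:
  assumes "1 \<le> p" "\<And>y. 0 \<le> N y" "a \<le> t" "t \<le> b"
  shows "N (v t) \<le> seg_norm p N v a b"
  using assms(1)
proof (cases rule: ge_one_ereal_cases)
  case 1
  then show ?thesis unfolding seg_norm_def using assms by (auto intro!: Max_ge)
next
  case (2 q)
  have "N (v t) = (N (v t) powr q) powr (1 / q)" using 2 assms by (simp add: powr_powr)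
  also have "\<dots> \<le> (\<Sum>s=a..b. N (v s) powr q) powr (1 / q)"
    using 2 assms by (intro powr_mono2 member_le_sum) auto
  finally show ?thesis unfolding seg_norm_def using 2 by simp
qed

lemma seg_norm_nonneg:
  assumes "1 \<le> p" "\<And>y. 0 \<le> N y" "a \<le> b"
  shows "0 \<le> seg_norm p N v a b"
proof -
  have "N (v a) \<le> seg_norm p N v a b" using seg_norm_ge[of p N a a b v] assms by simp
  then show ?thesis using assms(2)[of "v a"] by linarith
qed

lemma seg_norm_infinity_le:
  assumes "\<And>t. a \<le> t \<Longrightarrow> t \<le> b \<Longrightarrow> N (v t) \<le> B" "a \<le> b"
  shows "seg_norm \<infinity> N v a b \<le> B"
  unfolding seg_norm_def using assms by (auto intro!: Max.boundedI)

lemma seg_norm_restart_le: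
  assumes "1 \<le> p" "\<And>y. 0 \<le> N y" "k \<le> m"
  shows "seg_norm p N (\<lambda>j. if j = 0 then a else v (k + j)) 0 (m - k) \<le> N a + seg_norm p N v k m"
  using assms(1)
proof (cases rule: ge_one_ereal_cases)
  case 1
  have "N (v (k + j)) \<le> seg_norm p N v k m" if "j \<le> m - k" for j
    using seg_norm_ge[of p N k "k + j" m v] assms that by simp
  moreover have "0 \<le> seg_norm p N v k m" using seg_norm_nonneg[OF assms] .
  ultimately show ?thesis unfolding 1 using assms(2)[of a]
    by (intro seg_norm_infinity_le) (auto intro: add_increasing)
next
  case (2 q)
  define S where "S = (\<Sum>t=k..m. N (v t) powr q)"
  have S0: "0 \<le> S" unfolding S_def by (simp add: sum_nonneg)
  have "(\<Sum>j=0..m-k. N (if j = 0 then a else v (k + j)) powr q)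
      \<le> (\<Sum>j=0..m-k. (if j = 0 then N a powr q else 0) + N (v (j + k)) powr q)"
    by (rule sum_mono) (auto simp: add.commute)
  also have "\<dots> = N a powr q + S"
    using sum.shift_bounds_cl_nat_ivl[of "\<lambda>t. N (v t) powr q" 0 k "m - k"] assms(3)
    by (simp add: sum.distrib S_def)
  also have "\<dots> = N a powr q + (S powr (1 / q)) powr q" using S0 2 by (simp add: powr_powr)
  finally have "(\<Sum>j=0..m-k. N (if j = 0 then a else v (k + j)) powr q) powr (1 / q)
      \<le> (N a powr q + (S powr (1 / q)) powr q) powr (1 / q)"
    using 2 by (intro powr_mono2) (auto simp: sum_nonneg)
  also have "\<dots> \<le> N a + S powr (1 / q)" using root_powr_add_le assms(2) 2 by simp
  finally show ?thesis unfolding seg_norm_def S_def using 2 by simp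
qed

lemma in_lp_Suc_iff: "in_lp p N (\<lambda>i. v (Suc i)) \<longleftrightarrow> in_lp p N v"
proof (cases "p = \<infinity>")
  case True
  have "(\<exists>B. \<forall>i. N (v (Suc i)) \<le> B) \<Longrightarrow> (\<exists>B. \<forall>i. N (v i) \<le> B)"
    by (metis max.cobounded1 max.coboundedI2 not0_implies_Suc)
  then show ?thesis unfolding in_lp_def using True by auto
next
  case False
  then show ?thesis
    unfolding in_lp_def using summable_Suc_iff[of "\<lambda>t. N (v t) powr real_of_ereal p"] by simp
qed

lemma in_lp_cmult:
  assumes "in_lp p abs v"
  shows "in_lp p abs (\<lambda>i. c * v i)"
proof (cases "p = \<infinity>")
  case True
  then obtain B where "\<And>i. \<bar>v i\<bar> \<le> B" using assms unfolding in_lp_def by auto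
  then have "\<bar>c * v i\<bar> \<le> \<bar>c\<bar> * B" for i by (simp add: abs_mult mult_left_mono)
  then show ?thesis unfolding in_lp_def using True by auto
next
  case False
  then have "summable (\<lambda>i. \<bar>c\<bar> powr real_of_ereal p * \<bar>v i\<bar> powr real_of_ereal p)"
    using assms unfolding in_lp_def by (simp add: summable_mult)
  then show ?thesis unfolding in_lp_def using False by (simp add: abs_mult powr_mult)
qed

lemma enat_le_if_strict_steps:
  fixes tt :: "nat \<Rightarrow> enat"
  assumes "tt 0 = 0" "\<And>i. tt i + 1 \<le> tt (Suc i)"
  shows "enat i \<le> tt i"
proof (induction i)
  case 0
  then show ?case using assms(1) by (simp add: zero_enat_def)
next
  case (Suc i)
  have "enat (Suc i) = enat i + 1" by (simp add: one_enat_def)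
  also have "\<dots> \<le> tt (Suc i)" using add_right_mono[OF Suc.IH, of 1] assms(2)[of i] by (rule order_trans)
  finally show ?case .
qed

lemma update_window_exists:
  fixes tt :: "nat \<Rightarrow> enat"
  assumes "tt 0 = 0" "\<And>i. enat i \<le> tt i"
  obtains i k where "tt i = enat k" "k \<le> t" "enat t < tt (Suc i)"
proof -
  have "enat t < tt (Suc t)" using assms(2)[of "Suc t"] by (simp add: Suc_ile_eq)
  then have ex: "\<exists>j. enat t < tt j" ..
  define j where "j = (LEAST j. enat t < tt j)"
  have j: "enat t < tt j" unfolding j_def using ex by (rule LeastI_ex)
  moreover have "j \<noteq> 0"
  proof
    assume "j = 0"
    with j assms(1) show False by (simp add: zero_enat_def)
  qed
  then obtain i where i: "j = Suc i" using not0_implies_Suc by blast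
  have "\<not> enat t < tt i" using not_less_Least[of i "\<lambda>j. enat t < tt j"] i unfolding j_def by simp
  then obtain k where "tt i = enat k" "k \<le> t" by (cases "tt i") auto
  then show ?thesis using that j i by blast
qed

lemma sum_atMost_le_window_bounds:
  fixes tt :: "nat \<Rightarrow> enat" and g h c :: "nat \<Rightarrow> real"
  assumes tt0: "tt 0 = 0" and tt_ge: "\<And>i. enat i \<le> tt i" and c: "\<And>i. 0 \<le> c i"
    and window: "\<And>i k N. tt i = enat k \<Longrightarrow> k \<le> N \<Longrightarrow> enat N < tt (Suc i) \<Longrightarrow>
        (\<Sum>t=k..N. g t) \<le> c i + (\<Sum>t=k..N. h t)"
  shows "(\<Sum>t\<le>N. g t) \<le> (\<Sum>i\<le>N. c i) + (\<Sum>t\<le>N. h t)"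
proof -
  have "enat N < tt (Suc i) \<Longrightarrow> (\<Sum>t\<le>N. g t) \<le> (\<Sum>j\<le>i. c j) + (\<Sum>t\<le>N. h t)" for i N
  proof (induction i arbitrary: N)
    case 0
    then show ?case using window[of 0 0 N] tt0 by (simp add: atMost_atLeast0 zero_enat_def)
  next
    case (Suc i)
    show ?case
    proof (cases "enat N < tt (Suc i)")
      case True
      then show ?thesis using Suc.IH[OF True] c[of "Suc i"] by simp
    next
      case False
      then obtain k where k: "tt (Suc i) = enat k" "k \<le> N" by (cases "tt (Suc i)") auto
      then have "1 \<le> k" using tt_ge[of "Suc i"] by simp
      then have "{..N} = {..k - 1} \<union> {k..N}" "{..k - 1} \<inter> {k..N} = {}" using k(2) by auto
      then have split: "(\<Sum>t\<le>N. f t) = (\<Sum>t\<le>k - 1. f t) + (\<Sum>t=k..N. f t)" for f :: "nat \<Rightarrow> real"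
        by (simp add: sum.union_disjoint)
      have "(\<Sum>t\<le>k - 1. g t) \<le> (\<Sum>j\<le>i. c j) + (\<Sum>t\<le>k - 1. h t)"
        using Suc.IH[of "k - 1"] k(1) \<open>1 \<le> k\<close> by simp
      moreover have "(\<Sum>t=k..N. g t) \<le> c (Suc i) + (\<Sum>t=k..N. h t)" using window k Suc.prems .
      ultimately show ?thesis using split[of g] split[of h] by simp
    qed
  qed
  moreover have "enat N < tt (Suc N)" using tt_ge[of "Suc N"] by (simp add: Suc_ile_eq)
  ultimately show ?thesis .
qed

lemma in_lp_infinity_if_window_bounds:
  fixes tt :: "nat \<Rightarrow> enat" and \<rho> :: "nat \<Rightarrow> real"
  assumes tt0: "tt 0 = 0" and tt_ge: "\<And>i. enat i \<le> tt i"
    and Ny: "\<And>a. 0 \<le> Ny a" and c: "0 \<le> c"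
    and \<rho>: "in_lp \<infinity> abs \<rho>" and v: "in_lp \<infinity> Nv v"
    and window: "\<And>i k N. tt i = enat k \<Longrightarrow> k \<le> N \<Longrightarrow> enat N < tt (Suc i) \<Longrightarrow>
        seg_norm \<infinity> Ny y k N \<le> \<rho> i + c * seg_norm \<infinity> Nv v k N"
  shows "in_lp \<infinity> Ny y"
proof -
  obtain B\<rho> where B\<rho>: "\<And>i. \<bar>\<rho> i\<bar> \<le> B\<rho>" using \<rho> unfolding in_lp_def by auto
  obtain Bv where Bv: "\<And>t. Nv (v t) \<le> Bv" using v unfolding in_lp_def by auto
  have "Ny (y t) \<le> B\<rho> + c * Bv" for t
  proof -
    obtain i k where win: "tt i = enat k" "k \<le> t" "enat t < tt (Suc i)"
      using update_window_exists[OF tt0 tt_ge] .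
    have "Ny (y t) \<le> seg_norm \<infinity> Ny y k t" using seg_norm_ge[of \<infinity> Ny k t t y] Ny win(2) by simp
    also have "\<dots> \<le> \<rho> i + c * seg_norm \<infinity> Nv v k t" using window[OF win] .
    also have "\<dots> \<le> B\<rho> + c * Bv"
      using B\<rho>[of i] c seg_norm_infinity_le[of k t Nv v Bv] Bv win(2)
      by (intro add_mono mult_left_mono) auto
    finally show ?thesis .
  qed
  then show ?thesis unfolding in_lp_def by auto
qed

lemma in_lp_finite_if_window_bounds:
  fixes tt :: "nat \<Rightarrow> enat" and \<rho> :: "nat \<Rightarrow> real" and q :: real
  assumes q: "1 \<le> q" and tt0: "tt 0 = 0" and tt_ge: "\<And>i. enat i \<le> tt i"
    and Ny: "\<And>a. 0 \<le> Ny a" and Nv: "\<And>b. 0 \<le> Nv b" and c: "0 \<le> c"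
    and \<rho>: "in_lp (ereal q) abs \<rho>" and v: "in_lp (ereal q) Nv v"
    and window: "\<And>i k N. tt i = enat k \<Longrightarrow> k \<le> N \<Longrightarrow> enat N < tt (Suc i) \<Longrightarrow>
        seg_norm (ereal q) Ny y k N \<le> \<rho> i + c * seg_norm (ereal q) Nv v k N"
  shows "in_lp (ereal q) Ny y"
proof -
  define Y V R where "Y t = Ny (y t) powr q" and "V t = Nv (v t) powr q" and "R i = \<bar>\<rho> i\<bar> powr q"
    for t i
  have sum_V: "summable V" and sum_R: "summable R"
    using v \<rho> unfolding in_lp_def V_def R_def by simp_all
  \<comment> \<open>\<open>(a + b) powr q \<le> 2 powr q * (a powr q + b powr q)\<close> stands in for Minkowski's inequality.\<close>
  have window_sum: "(\<Sum>t=k..N. Y t) \<le> 2 powr q * R i + (\<Sum>t=k..N. 2 powr q * c powr q * V t)"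
    if win: "tt i = enat k" "k \<le> N" "enat N < tt (Suc i)" for i k N
  proof -
    define S where "S = (\<Sum>t=k..N. V t)"
    have S0: "0 \<le> S" unfolding S_def V_def by (simp add: sum_nonneg)
    have "(\<Sum>t=k..N. Y t) powr (1 / q) \<le> \<rho> i + c * S powr (1 / q)"
      using window[OF win] unfolding seg_norm_def Y_def S_def V_def by simp
    also have "\<dots> \<le> \<bar>\<rho> i\<bar> + c * S powr (1 / q)" by simp
    finally have "(\<Sum>t=k..N. Y t) \<le> (\<bar>\<rho> i\<bar> + c * S powr (1 / q)) powr q"
      using q unfolding Y_def by (intro le_powr_if_root_le) (auto simp: sum_nonneg)
    also have "\<dots> \<le> 2 powr q * (\<bar>\<rho> i\<bar> powr q + (c * S powr (1 / q)) powr q)"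
      using q c S0 by (intro add_powr_le_two_powr) auto
    also have "(c * S powr (1 / q)) powr q = c powr q * S"
      using q c S0 by (simp add: powr_mult powr_powr)
    finally show ?thesis by (simp add: R_def S_def sum_distrib_left algebra_simps)
  qed
  have "(\<Sum>t\<le>N. Y t) \<le> 2 powr q * suminf R + 2 powr q * c powr q * suminf V" for N
  proof -
    have "(\<Sum>t\<le>N. Y t) \<le> (\<Sum>i\<le>N. 2 powr q * R i) + (\<Sum>t\<le>N. 2 powr q * c powr q * V t)"
      by (rule sum_atMost_le_window_bounds[OF tt0 tt_ge _ window_sum]) (simp add: R_def)
    also have "\<dots> \<le> 2 powr q * suminf R + 2 powr q * c powr q * suminf V"
      unfolding sum_distrib_left[symmetric]
      using sum_le_suminf[OF sum_R, of "{..N}"] sum_le_suminf[OF sum_V, of "{..N}"]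
      by (intro add_mono mult_left_mono) (auto simp: R_def V_def)
    finally show ?thesis .
  qed
  then have "summable Y" by (intro bounded_imp_summable) (simp add: Y_def)
  then show ?thesis unfolding in_lp_def Y_def by simp
qed

lemma in_lp_if_window_bounds:
  fixes tt :: "nat \<Rightarrow> enat" and \<rho> :: "nat \<Rightarrow> real"
  assumes "1 \<le> p" "tt 0 = 0" "\<And>i. enat i \<le> tt i"
    and "\<And>a. 0 \<le> Ny a" "\<And>b. 0 \<le> Nv b" "0 \<le> c"
    and "in_lp p abs \<rho>" "in_lp p Nv v"
    and "\<And>i k N. tt i = enat k \<Longrightarrow> k \<le> N \<Longrightarrow> enat N < tt (Suc i) \<Longrightarrow>
        seg_norm p Ny y k N \<le> \<rho> i + c * seg_norm p Nv v k N"
  shows "in_lp p Ny y"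
  using assms(1)
proof (cases rule: ge_one_ereal_cases)
  case 1
  then show ?thesis using in_lp_infinity_if_window_bounds assms(2-) by blast
next
  case (2 q)
  then show ?thesis using in_lp_finite_if_window_bounds assms(2-) by blast
qed

locale closed_loop =
  fixes p :: ereal
    and nx :: "'x::real_vector \<Rightarrow> real" and nu :: "'u::real_vector \<Rightarrow> real"
    and f :: "nat \<Rightarrow> 'x \<Rightarrow> 'u \<Rightarrow> 'x" and \<gamma>F :: real
    and M :: "nat \<Rightarrow> (nat \<Rightarrow> 'x) \<Rightarrow> (nat \<Rightarrow> 'u)" and \<gamma>M :: "nat \<Rightarrow> real" and \<gamma>bar :: real
    and r \<epsilon> :: "nat \<Rightarrow> real"
    and w x :: "nat \<Rightarrow> 'x" and u :: "nat \<Rightarrow> 'u"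
    and tt :: "nat \<Rightarrow> enat"
  assumes p_ge: "1 \<le> p"
    and nx_norm: "is_vnorm nx" and nu_norm: "is_vnorm nu"
    and plant_gain: "\<And>s xs N uu ww. s \<le> N \<Longrightarrow>
        seg_norm p nx (plant_traj f s xs uu ww) 0 (N - s)
          \<le> \<gamma>F * nx xs + \<gamma>F * (seg_norm p nu uu s N + seg_norm p nx ww s N)"
    and M_gain: "\<And>i z N. seg_norm p nu (M i z) 0 N \<le> \<gamma>M i * seg_norm p nx z 0 N"
    and \<gamma>M_nonneg: "\<And>i. 0 \<le> \<gamma>M i"
    and \<gamma>M_le: "\<And>i. \<gamma>M i \<le> \<gamma>bar"
    and r_lp: "in_lp p abs (\<lambda>i. r (Suc i))"
    and r_bound: "\<And>i. i \<ge> 1 \<Longrightarrow> \<gamma>F * (\<gamma>M i + 1) * \<epsilon> i \<le> r i"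
    and w_lp: "in_lp p nx w"
    and x0: "x 0 = w 0"
    and x_step: "\<And>t. x (Suc t) = f t (x t) (u t) + w (Suc t)"
    and tt0: "tt 0 = 0"
    and tt_ge: "\<And>i. enat i \<le> tt i"
    and u_def: "\<And>i k t. tt i = enat k \<Longrightarrow> k \<le> t \<Longrightarrow> enat t < tt (Suc i) \<Longrightarrow>
        u t = M i (\<lambda>j. if j = 0 then x k else w (k + j)) (t - k)"
    and admissible: "\<And>i k. i \<ge> 1 \<Longrightarrow> tt i = enat k \<Longrightarrow> nx (x k) \<le> \<epsilon> i"
begin

lemma nx_nonneg: "0 \<le> nx v" and nu_nonneg: "0 \<le> nu v'"
  using vnorm_nonneg[OF nx_norm] vnorm_nonneg[OF nu_norm] by auto

lemma seg_norm_nx_nonneg: "a \<le> b \<Longrightarrow> 0 \<le> seg_norm p nx v a b"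
  by (rule seg_norm_nonneg[OF p_ge]) (simp_all add: nx_nonneg)

lemma nx_le_seg_norm: "a \<le> t \<Longrightarrow> t \<le> b \<Longrightarrow> nx (v t) \<le> seg_norm p nx v a b"
  by (rule seg_norm_ge[OF p_ge]) (simp_all add: nx_nonneg)

lemma plant_traj_from_state: "plant_traj f k (x k) u w j = x (k + j)"
  by (induction j) (simp_all add: x_step)

text \<open>The hypotheses allow \<open>\<gamma>F < 0\<close> when both signal spaces are trivial, so the plant gain
  enters through \<open>max \<gamma>F 0\<close>.\<close>

lemma state_segment_le:
  assumes "k \<le> N"
  shows "seg_norm p nx x k N
    \<le> max \<gamma>F 0 * nx (x k) + max \<gamma>F 0 * (seg_norm p nu u k N + seg_norm p nx w k N)"
proof -
  have "seg_norm p nx x k N = seg_norm p nx (plant_traj f k (x k) u w) 0 (N - k)"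
    unfolding seg_norm_shift[OF assms] plant_traj_from_state
    by (rule seg_norm_cong) (simp add: add.commute)
  also have "\<dots> \<le> \<gamma>F * nx (x k) + \<gamma>F * (seg_norm p nu u k N + seg_norm p nx w k N)"
    using plant_gain assms .
  also have "\<dots> \<le> max \<gamma>F 0 * nx (x k) + max \<gamma>F 0 * (seg_norm p nu u k N + seg_norm p nx w k N)"
    using assms p_ge nx_nonneg nu_nonneg
    by (intro add_mono mult_right_mono add_nonneg_nonneg seg_norm_nonneg) auto
  finally show ?thesis .
qed

lemma input_segment_le:
  assumes win: "tt i = enat k" "k \<le> N" "enat N < tt (Suc i)"
  shows "seg_norm p nu u k N \<le> \<gamma>M i * (nx (x k) + seg_norm p nx w k N)"
proof -
  define z where "z = (\<lambda>j. if j = 0 then x k else w (k + j))"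
  have "seg_norm p nu u k N = seg_norm p nu (M i z) 0 (N - k)"
  proof -
    have "u (j + k) = M i z j" if "j \<le> N - k" for j
      using u_def[OF win(1), of "j + k"] that win(2,3) order.strict_trans1[of "enat (j + k)" "enat N"]
      by (simp add: z_def)
    then show ?thesis unfolding seg_norm_shift[OF win(2)] by (intro seg_norm_cong) simp
  qed
  also have "\<dots> \<le> \<gamma>M i * seg_norm p nx z 0 (N - k)" using M_gain .
  also have "\<dots> \<le> \<gamma>M i * (nx (x k) + seg_norm p nx w k N)"
    unfolding z_def using seg_norm_restart_le[OF p_ge nx_nonneg win(2)] \<gamma>M_nonneg
    by (rule mult_left_mono)
  finally show ?thesis .
qed

lemma \<gamma>bar_nonneg: "0 \<le> \<gamma>bar"
  using \<gamma>M_nonneg[of 0] \<gamma>M_le[of 0] by linarith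

lemma r_abs_lp: "in_lp p abs (\<lambda>i. \<bar>r i\<bar>)"
  using r_lp unfolding in_lp_Suc_iff by (simp add: in_lp_def)

lemma restart_state_term_le:
  assumes win: "tt i = enat k" "k \<le> N" "enat N < tt (Suc i)"
  shows "max \<gamma>F 0 * (\<gamma>M i + 1) * nx (x k) \<le> \<bar>r i\<bar> + max \<gamma>F 0 * (\<gamma>bar + 1) * seg_norm p nx w k N"
proof (cases "i = 0")
  case True
  then have "x k = w k" using win(1) tt0 x0 by (simp add: zero_enat_def)
  then have "nx (x k) \<le> seg_norm p nx w k N" using nx_le_seg_norm[OF order_refl win(2)] by simp
  then have "max \<gamma>F 0 * (\<gamma>M i + 1) * nx (x k) \<le> max \<gamma>F 0 * (\<gamma>bar + 1) * seg_norm p nx w k N"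
    using \<gamma>M_le[of i] \<gamma>M_nonneg[of i] nx_nonneg by (intro mult_mono) auto
  then show ?thesis by linarith
next
  case False
  have "max \<gamma>F 0 * (\<gamma>M i + 1) * nx (x k) \<le> max \<gamma>F 0 * (\<gamma>M i + 1) * \<epsilon> i"
    using admissible[of i k] False win(1) \<gamma>M_nonneg[of i] by (intro mult_left_mono) auto
  also have "\<dots> \<le> \<bar>r i\<bar>"
  proof (cases "\<gamma>F \<le> 0")
    case True
    then show ?thesis by simp
  next
    case False
    then show ?thesis using r_bound[of i] \<open>i \<noteq> 0\<close> by simp
  qed
  moreover have "0 \<le> max \<gamma>F 0 * (\<gamma>bar + 1) * seg_norm p nx w k N"
    using seg_norm_nx_nonneg[OF win(2)] \<gamma>bar_nonneg by simp
  ultimately show ?thesis by linarith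
qed

lemma state_window_bound:
  assumes win: "tt i = enat k" "k \<le> N" "enat N < tt (Suc i)"
  shows "seg_norm p nx x k N \<le> \<bar>r i\<bar> + 2 * max \<gamma>F 0 * (\<gamma>bar + 1) * seg_norm p nx w k N"
proof -
  define G a s where "G = max \<gamma>F 0" and "a = nx (x k)" and "s = seg_norm p nx w k N"
  have G: "0 \<le> G" and s: "0 \<le> s"
    using seg_norm_nx_nonneg[OF win(2)] by (simp_all add: G_def s_def)
  have "seg_norm p nx x k N \<le> G * a + G * (seg_norm p nu u k N + s)"
    using state_segment_le[OF win(2)] unfolding G_def a_def s_def .
  also have "\<dots> \<le> G * a + G * (\<gamma>M i * (a + s) + s)"
    using input_segment_le[OF win] G unfolding a_def s_def by (simp add: mult_left_mono)
  also have "\<dots> = G * (\<gamma>M i + 1) * a + G * (\<gamma>M i + 1) * s" by (simp add: algebra_simps)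
  also have "G * (\<gamma>M i + 1) * s \<le> G * (\<gamma>bar + 1) * s"
    using G s \<gamma>M_le[of i] by (intro mult_right_mono mult_left_mono) auto
  also have "G * (\<gamma>M i + 1) * a \<le> \<bar>r i\<bar> + G * (\<gamma>bar + 1) * s"
    using restart_state_term_le[OF win] unfolding G_def a_def s_def .
  finally show ?thesis unfolding s_def G_def by (simp add: algebra_simps)
qed

lemma input_window_bound:
  assumes win: "tt i = enat k" "k \<le> N" "enat N < tt (Suc i)"
  shows "seg_norm p nu u k N
    \<le> \<gamma>bar * \<bar>r i\<bar> + \<gamma>bar * (2 * max \<gamma>F 0 * (\<gamma>bar + 1) + 1) * seg_norm p nx w k N"
proof -
  define s where "s = seg_norm p nx w k N"
  have s: "0 \<le> s" using seg_norm_nx_nonneg[OF win(2)] by (simp add: s_def)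
  have "nx (x k) \<le> seg_norm p nx x k N" using nx_le_seg_norm[OF order_refl win(2)] .
  also have "\<dots> \<le> \<bar>r i\<bar> + 2 * max \<gamma>F 0 * (\<gamma>bar + 1) * s"
    using state_window_bound[OF win] unfolding s_def .
  finally have "nx (x k) + s \<le> \<bar>r i\<bar> + (2 * max \<gamma>F 0 * (\<gamma>bar + 1) + 1) * s"
    by (simp add: algebra_simps)
  have "seg_norm p nu u k N \<le> \<gamma>M i * (nx (x k) + s)"
    using input_segment_le[OF win] unfolding s_def .
  also have "\<dots> \<le> \<gamma>bar * (nx (x k) + s)"
    using nx_nonneg s by (intro mult_right_mono[OF \<gamma>M_le]) simp
  also have "\<dots> \<le> \<gamma>bar * (\<bar>r i\<bar> + (2 * max \<gamma>F 0 * (\<gamma>bar + 1) + 1) * s)"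
    using \<gamma>bar_nonneg by (rule mult_left_mono[OF \<open>nx (x k) + s \<le> _\<close>])
  finally show ?thesis unfolding s_def by (simp add: algebra_simps)
qed

lemma state_in_lp: "in_lp p nx x"
  using p_ge tt0 tt_ge nx_nonneg nx_nonneg _ r_abs_lp w_lp state_window_bound
  by (rule in_lp_if_window_bounds) (simp add: \<gamma>bar_nonneg)

lemma input_in_lp: "in_lp p nu u"
  using p_ge tt0 tt_ge nu_nonneg nx_nonneg _ in_lp_cmult[OF r_abs_lp] w_lp input_window_bound
  by (rule in_lp_if_window_bounds) (simp add: \<gamma>bar_nonneg)

end

theorem theorem2:
  fixes p :: ereal
    and nx :: "real^'n \<Rightarrow> real" and nu :: "real^'m \<Rightarrow> real"
    and f :: "nat \<Rightarrow> real^'n \<Rightarrow> real^'m \<Rightarrow> real^'n"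
    and \<gamma>F :: real
    and M :: "nat \<Rightarrow> (nat \<Rightarrow> real^'n) \<Rightarrow> (nat \<Rightarrow> real^'m)"
    and \<gamma>M :: "nat \<Rightarrow> real" and \<gamma>bar :: real
    and \<mu> :: "real^'n \<Rightarrow> enat"
    and r \<epsilon> :: "nat \<Rightarrow> real"
    and w x :: "nat \<Rightarrow> real^'n" and u :: "nat \<Rightarrow> real^'m"
    and tt :: "nat \<Rightarrow> enat"
  assumes p_ge: "1 \<le> p"
    and nx_norm: "is_vnorm nx" and nu_norm: "is_vnorm nu"
    \<comment> \<open>standing assumption on the plant: finite l_p gain \<gamma>F, from any starting time\<close>
    and plant_gain: "\<And>s xs N uu ww. s \<le> N \<Longrightarrow>
        seg_norm p nx (plant_traj f s xs uu ww) 0 (N - s)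
          \<le> \<gamma>F * nx xs + \<gamma>F * (seg_norm p nu uu s N + seg_norm p nx ww s N)"
    \<comment> \<open>controller operators: causal with finite l_p gain \<gamma>M i > 0\<close>
    and M_causal: "\<And>i. causal (M i)"
    and M_gain: "\<And>i z N. seg_norm p nu (M i z) 0 N \<le> \<gamma>M i * seg_norm p nx z 0 N"
    and \<gamma>M_pos: "\<And>i. \<gamma>M i > 0"
    and \<gamma>bar_pos: "\<gamma>bar > 0"
    and \<gamma>M_le: "\<And>i. \<gamma>M i \<le> \<gamma>bar"
    \<comment> \<open>update-window length function (value \<infinity> allows a final infinite window)\<close>
    and \<mu>_ge: "\<And>\<xi>. \<mu> \<xi> \<ge> 1"
    \<comment> \<open>the sequence r and the thresholds\<close>
    and r_nonneg: "\<And>i. i \<ge> 1 \<Longrightarrow> r i \<ge> 0"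
    and r_lp: "in_lp p abs (\<lambda>i. r (Suc i))"
    and \<epsilon>_pos: "\<And>i. i \<ge> 1 \<Longrightarrow> \<epsilon> i > 0"
    and r_bound: "\<And>i. i \<ge> 1 \<Longrightarrow> \<gamma>F * (\<gamma>M i + 1) * \<epsilon> i \<le> r i"
    \<comment> \<open>disturbance in l_p\<close>
    and w_lp: "in_lp p nx w"
    \<comment> \<open>closed loop: plant dynamics with x_0 = w_0\<close>
    and x0: "x 0 = w 0"
    and x_step: "\<And>t. x (Suc t) = f t (x t) (u t) + w (Suc t)"
    \<comment> \<open>update instants\<close>
    and tt0: "tt 0 = 0"
    and tt_step: "\<And>i. tt (Suc i) = tt i + \<mu> (x (the_enat (tt i)))"
    \<comment> \<open>concatenated controller, reinitialised at each update instant\<close>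
    and u_def: "\<And>i k t. tt i = enat k \<Longrightarrow> k \<le> t \<Longrightarrow> enat t < tt (Suc i) \<Longrightarrow>
        u t = M i (\<lambda>j. if j = 0 then x k else w (k + j)) (t - k)"
    \<comment> \<open>admissibility of every update\<close>
    and admissible: "\<And>i k. i \<ge> 1 \<Longrightarrow> tt i = enat k \<Longrightarrow> nx (x k) \<le> \<epsilon> i"
  shows "in_lp p nx x \<and> in_lp p nu u"
proof -
  have tt_ge: "enat i \<le> tt i" for i
  proof (rule enat_le_if_strict_steps[of tt, OF tt0])
    show "tt i + 1 \<le> tt (Suc i)" for i using tt_step[of i] \<mu>_ge by (simp add: add_left_mono)
  qed
  interpret closed_loop p nx nu f \<gamma>F M \<gamma>M \<gamma>bar r \<epsilon> w x u tt
    by unfold_locales (fact p_ge nx_norm nu_norm plant_gain M_gain less_imp_le[OF \<gamma>M_pos] \<gamma>M_le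
        r_lp r_bound w_lp x0 x_step tt0 tt_ge u_def admissible)+
  show ?thesis using state_in_lp input_in_lp ..
qed

end
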